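(* Let $n\ge4$. Then $\operatorname{zir}(C_n)=\operatorname{Z}(C_n)=\overline{\operatorname{Z}}(C_n)=2$ and $\operatorname{ZIR}(C_n)=\lfloor n/2\rfloor$.
   Context: $C_n$ is the cycle on $n$ vertices. Zero forcing: a blue vertex $u$ changes a white vertex $w$ to blue if $w$ is the only white neighbor of $u$; $B$ is a zero forcing set if from blue set $B$ eventually all vertices are blue; $\operatorname{Z}(G)$ is the minimum size of a zero forcing set and $\overline{\operatorname{Z}}(G)$ the maximum size of an inclusion-minimal zero forcing set. A nonempty $F\subseteq V(G)$ is a fort if every $v\notin F$ has $|N(v)\cap F|\ne1$. A private fort of $x\in S$ relative to $S$ is a fort $F$ with $S\cap F=\{x\}$; $S$ is a ZIr-set if every element of $S$ has a private fort. $\operatorname{zir}(G)$ / $\operatorname{ZIR}(G)$ are the minimum / maximum cardinality of an inclusion-maximal ZIr-set. *)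

theory Defs
  imports Main
begin

text \<open>A finite simple graph is given by a vertex set V and a symmetric irreflexive
adjacency relation E (only its restriction to V matters).\<close>

definition nbrs :: "'a set \<Rightarrow> ('a \<Rightarrow> 'a \<Rightarrow> bool) \<Rightarrow> 'a \<Rightarrow> 'a set" where
  "nbrs V E v = {u \<in> V. E v u}"

definition force_step :: "'a set \<Rightarrow> ('a \<Rightarrow> 'a \<Rightarrow> bool) \<Rightarrow> 'a set \<Rightarrow> 'a set" where
  "force_step V E S = S \<union> {w \<in> V. \<exists>u\<in>S. nbrs V E u - S = {w}}"

definition zf_closure :: "'a set \<Rightarrow> ('a \<Rightarrow> 'a \<Rightarrow> bool) \<Rightarrow> 'a set \<Rightarrow> 'a set" where
  "zf_closure V E B = (\<Union>k. (force_step V E ^^ k) B)"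

definition zero_forcing_set :: "'a set \<Rightarrow> ('a \<Rightarrow> 'a \<Rightarrow> bool) \<Rightarrow> 'a set \<Rightarrow> bool" where
  "zero_forcing_set V E B \<longleftrightarrow> B \<subseteq> V \<and> V \<subseteq> zf_closure V E B"

definition Z :: "'a set \<Rightarrow> ('a \<Rightarrow> 'a \<Rightarrow> bool) \<Rightarrow> nat" where
  "Z V E = Min {card B | B. zero_forcing_set V E B}"

definition minimal_zfs :: "'a set \<Rightarrow> ('a \<Rightarrow> 'a \<Rightarrow> bool) \<Rightarrow> 'a set \<Rightarrow> bool" where
  "minimal_zfs V E B \<longleftrightarrow> zero_forcing_set V E B \<and>
     (\<forall>B'. B' \<subset> B \<longrightarrow> \<not> zero_forcing_set V E B')"

definition Zbar :: "'a set \<Rightarrow> ('a \<Rightarrow> 'a \<Rightarrow> bool) \<Rightarrow> nat" where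
  "Zbar V E = Max {card B | B. minimal_zfs V E B}"

definition fort :: "'a set \<Rightarrow> ('a \<Rightarrow> 'a \<Rightarrow> bool) \<Rightarrow> 'a set \<Rightarrow> bool" where
  "fort V E F \<longleftrightarrow> F \<noteq> {} \<and> F \<subseteq> V \<and> (\<forall>v \<in> V - F. card (nbrs V E v \<inter> F) \<noteq> 1)"

definition private_fort :: "'a set \<Rightarrow> ('a \<Rightarrow> 'a \<Rightarrow> bool) \<Rightarrow> 'a set \<Rightarrow> 'a \<Rightarrow> 'a set \<Rightarrow> bool" where
  "private_fort V E S x F \<longleftrightarrow> fort V E F \<and> S \<inter> F = {x}"

definition ZIr_set :: "'a set \<Rightarrow> ('a \<Rightarrow> 'a \<Rightarrow> bool) \<Rightarrow> 'a set \<Rightarrow> bool" where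
  "ZIr_set V E S \<longleftrightarrow> S \<subseteq> V \<and> (\<forall>x\<in>S. \<exists>F. private_fort V E S x F)"

definition maximal_ZIr_set :: "'a set \<Rightarrow> ('a \<Rightarrow> 'a \<Rightarrow> bool) \<Rightarrow> 'a set \<Rightarrow> bool" where
  "maximal_ZIr_set V E S \<longleftrightarrow> ZIr_set V E S \<and>
     (\<forall>T. ZIr_set V E T \<and> S \<subseteq> T \<longrightarrow> T = S)"

definition zir :: "'a set \<Rightarrow> ('a \<Rightarrow> 'a \<Rightarrow> bool) \<Rightarrow> nat" where
  "zir V E = Min {card S | S. maximal_ZIr_set V E S}"

definition ZIR :: "'a set \<Rightarrow> ('a \<Rightarrow> 'a \<Rightarrow> bool) \<Rightarrow> nat" where
  "ZIR V E = Max {card S | S. maximal_ZIr_set V E S}"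

definition cycle_V :: "nat \<Rightarrow> nat set" where
  "cycle_V n = {0..<n}"

definition cycle_E :: "nat \<Rightarrow> nat \<Rightarrow> nat \<Rightarrow> bool" where
  "cycle_E n i j \<longleftrightarrow> i \<noteq> j \<and> (j = (i + 1) mod n \<or> i = (j + 1) mod n)"

end

theory Submission
  imports Defs
begin

text \<open>If two consecutive vertices a, a+1 of the cycle lie outside a fort F, then so does a+2
  (otherwise a+1 would have exactly one neighbour in F), so the forts of C_n are exactly
  the nonempty vertex sets meeting every edge. Hence S is a ZIr-set iff deleting any single
  element leaves an independent set. Dually, an independent blue set cannot force anything,
  whereas two adjacent blue vertices force their way around the whole cycle; so the minimal
  zero forcing sets are exactly the edges. The edges are also maximal ZIr-sets and no smaller
  ones exist. A ZIr-set with at least three elements is itself independent, hence has at most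
  n/2 elements, and for n \<ge> 4 the even vertices other than n - 1 form a maximal ZIr-set of
  exactly that size.\<close>

lemma force_step_superset: "S \<subseteq> force_step V E S"
  unfolding force_step_def by blast

lemma zf_closure_eq_if_stalled:
  assumes "force_step V E B = B"
  shows "zf_closure V E B = B"
proof -
  have "(force_step V E ^^ k) B = B" for k
    by (induction k) (simp_all add: assms)
  then show ?thesis unfolding zf_closure_def by simp
qed

lemma finite_cards_of_subsets:
  assumes "finite A" and "\<And>S. P S \<Longrightarrow> S \<subseteq> A"
  shows "finite {card S | S. P S}"
proof (rule finite_subset)
  show "{card S | S. P S} \<subseteq> card ` Pow A" using assms(2) by blast
qed (use assms(1) in simp)

lemma cycle_succ_succ: "((u + 1) mod n + 1) mod n = (u + 2) mod (n::nat)"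
  by (simp add: mod_simps)

lemma cycle_succ_inj:
  assumes "u < n" "w < n" "(u + 1) mod n = (w + 1) mod (n::nat)"
  shows "u = w"
  using assms by (auto simp: mod_if split: if_splits)

lemma cycle_succ_ne: "2 \<le> n \<Longrightarrow> (u + 1) mod n \<noteq> u mod (n::nat)"
  by (simp add: mod_Suc)

lemma cycle_succ2_ne: "3 \<le> n \<Longrightarrow> u < n \<Longrightarrow> (u + 2) mod n \<noteq> (u::nat)"
  by (auto simp: mod_if)

lemma card_cycle_edge: "2 \<le> n \<Longrightarrow> a < n \<Longrightarrow> card {a, (a + 1) mod n} = 2" for n :: nat
  using cycle_succ_ne[of n a] by simp

lemma cycle_exists_pred:
  assumes "v < (n::nat)"
  obtains u where "u < n" "v = (u + 1) mod n"
proof (cases v)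
  case 0 then show ?thesis using that[of "n - 1"] assms by simp
next
  case (Suc u) then show ?thesis using that[of u] assms by simp
qed

lemma cycle_exists_offset:
  assumes "a < n" "v < (n::nat)"
  obtains k where "v = (a + k) mod n"
proof (cases "a \<le> v")
  case True then show ?thesis using that[of "v - a"] assms by simp
next
  case False
  then have "(a + (v + n - a)) mod n = v" using assms by simp
  then show ?thesis using that by metis
qed

lemma cycle_nbrs:
  assumes "3 \<le> n" "u < n"
  shows "nbrs (cycle_V n) (cycle_E n) ((u + 1) mod n) = {u, (u + 2) mod n}"
proof -
  have succ_ne: "(v + 1) mod n \<noteq> v" if "v < n" for v
    using cycle_succ_ne[of n v] assms(1) that by simp
  have "(u + 2) mod n \<noteq> (u + 1) mod n"
    using succ_ne[of "(u + 1) mod n"] assms(1) unfolding cycle_succ_succ by simp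
  moreover have "(u + 1) mod n = (w + 1) mod n \<longleftrightarrow> w = u" if "w < n" for w
    using cycle_succ_inj[OF assms(2) that] by blast
  ultimately show ?thesis
    using assms succ_ne[of u]
    unfolding nbrs_def cycle_V_def cycle_E_def by (auto simp: mod_simps)
qed

lemma cycle_fort_propagates:
  assumes n: "3 \<le> n" and F: "fort (cycle_V n) (cycle_E n) F" and u: "u < n"
    and "u \<notin> F" "(u + 1) mod n \<notin> F"
  shows "(u + 2) mod n \<notin> F"
proof
  assume "(u + 2) mod n \<in> F"
  then have "nbrs (cycle_V n) (cycle_E n) ((u + 1) mod n) \<inter> F = {(u + 2) mod n}"
    using cycle_nbrs[OF n u] \<open>u \<notin> F\<close> by auto
  moreover have "(u + 1) mod n \<in> cycle_V n - F"
    using assms unfolding cycle_V_def by simp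
  ultimately show False
    using F unfolding fort_def by (metis is_singleton_altdef is_singleton_def)
qed

lemma cycle_fort_meets_edge:
  assumes n: "3 \<le> n" and F: "fort (cycle_V n) (cycle_E n) F" and a: "a < n"
  shows "a \<in> F \<or> (a + 1) mod n \<in> F"
proof (rule ccontr)
  assume "\<not> ?thesis"
  then have white: "(a + k) mod n \<notin> F \<and> (a + k + 1) mod n \<notin> F" for k
  proof (induction k)
    case 0
    then show ?case using a by simp
  next
    case (Suc k)
    then have "((a + k) mod n + 2) mod n \<notin> F"
      using cycle_fort_propagates[OF n F, of "(a + k) mod n"] n by (simp add: mod_simps)
    then show ?case using Suc by (simp add: mod_simps)
  qed
  obtain v where "v \<in> F" using F unfolding fort_def by blast
  moreover have "v < n" using F \<open>v \<in> F\<close> unfolding fort_def cycle_V_def by auto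
  ultimately show False using cycle_exists_offset[OF a] white by metis
qed

lemma cycle_fort_if_meets_edges:
  assumes n: "3 \<le> n" and "F \<noteq> {}" "F \<subseteq> {0..<n}"
    and edges: "\<And>a. a < n \<Longrightarrow> a \<in> F \<or> (a + 1) mod n \<in> F"
  shows "fort (cycle_V n) (cycle_E n) F"
  unfolding fort_def
proof (intro conjI ballI)
  fix v assume v: "v \<in> cycle_V n - F"
  then obtain u where u: "u < n" "v = (u + 1) mod n"
    using cycle_exists_pred unfolding cycle_V_def by auto
  have "u \<in> F" using edges[OF u(1)] v u by auto
  moreover have "(u + 2) mod n \<in> F"
    using edges[of v] v u unfolding cycle_V_def by (auto simp: mod_simps)
  ultimately show "card (nbrs (cycle_V n) (cycle_E n) v \<inter> F) \<noteq> 1"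
    using cycle_nbrs[OF n u(1)] cycle_succ2_ne[OF n u(1)] u by auto
qed (use assms in \<open>auto simp: cycle_V_def\<close>)

lemma cycle_fort_iff:
  assumes "3 \<le> n"
  shows "fort (cycle_V n) (cycle_E n) F \<longleftrightarrow>
           F \<noteq> {} \<and> F \<subseteq> {0..<n} \<and> (\<forall>a<n. a \<in> F \<or> (a + 1) mod n \<in> F)"
  using cycle_fort_meets_edge[OF assms] cycle_fort_if_meets_edges[OF assms]
  unfolding fort_def cycle_V_def by auto

definition cycle_indep :: "nat \<Rightarrow> nat set \<Rightarrow> bool" where
  "cycle_indep n S \<longleftrightarrow> (\<forall>a\<in>S. (a + 1) mod n \<notin> S)"

lemma cycle_indep_subset: "cycle_indep n S \<Longrightarrow> T \<subseteq> S \<Longrightarrow> cycle_indep n T"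
  unfolding cycle_indep_def by blast

lemma cycle_indep_singleton: "2 \<le> n \<Longrightarrow> v < n \<Longrightarrow> cycle_indep n {v}"
  unfolding cycle_indep_def using cycle_succ_ne[of n v] by simp

lemma cycle_indep_card_le:
  assumes "cycle_indep n S" "S \<subseteq> {0..<n}"
  shows "2 * card S \<le> n"
proof -
  let ?succ = "\<lambda>a. (a + 1) mod n"
  have "inj_on ?succ S"
    using assms(2) cycle_succ_inj[of _ n] by (intro inj_onI) (meson atLeastLessThan_iff subsetD)
  moreover have "S \<inter> ?succ ` S = {}" using assms(1) unfolding cycle_indep_def by auto
  moreover have "finite S" using assms(2) finite_subset by blast
  ultimately have "2 * card S = card (S \<union> ?succ ` S)"
    by (simp add: card_Un_disjoint card_image)
  also have "\<dots> \<le> card {0..<n}" using assms(2) by (intro card_mono) auto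
  finally show ?thesis by simp
qed

lemma cycle_ZIr_set_iff:
  assumes n: "3 \<le> n"
  shows "ZIr_set (cycle_V n) (cycle_E n) S \<longleftrightarrow>
           S \<subseteq> {0..<n} \<and> (\<forall>x\<in>S. cycle_indep n (S - {x}))"
proof -
  have "(\<exists>F. private_fort (cycle_V n) (cycle_E n) S x F) \<longleftrightarrow> cycle_indep n (S - {x})"
    if "S \<subseteq> {0..<n}" "x \<in> S" for x
  proof
    assume "\<exists>F. private_fort (cycle_V n) (cycle_E n) S x F"
    then obtain F where F: "\<forall>a<n. a \<in> F \<or> (a + 1) mod n \<in> F" "S \<inter> F = {x}"
      unfolding private_fort_def cycle_fort_iff[OF n] by blast
    show "cycle_indep n (S - {x})"
      unfolding cycle_indep_def
    proof (intro ballI notI)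
      fix a assume "a \<in> S - {x}" "(a + 1) mod n \<in> S - {x}"
      moreover from this have "a < n" using that(1) by auto
      ultimately show False using F by blast
    qed
  next
    assume indep: "cycle_indep n (S - {x})"
    let ?F = "{0..<n} - (S - {x})"
    have "\<forall>a<n. a \<in> ?F \<or> (a + 1) mod n \<in> ?F"
      using indep n unfolding cycle_indep_def by auto
    moreover have "?F \<noteq> {}" "S \<inter> ?F = {x}" using that by auto
    ultimately have "private_fort (cycle_V n) (cycle_E n) S x ?F"
      unfolding private_fort_def cycle_fort_iff[OF n] by blast
    then show "\<exists>F. private_fort (cycle_V n) (cycle_E n) S x F" ..
  qed
  then show ?thesis unfolding ZIr_set_def cycle_V_def by blast
qed

lemma cycle_ZIr_set_doubleton:
  assumes "3 \<le> n" "x < n" "y < n"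
  shows "ZIr_set (cycle_V n) (cycle_E n) {x, y}"
proof -
  have "cycle_indep n ({x, y} - {z})" if "z \<in> {x, y}" for z
  proof (cases "z = x")
    case True
    then show ?thesis
      using cycle_indep_subset[OF cycle_indep_singleton[of n y], of "{x, y} - {z}"] assms by auto
  next
    case False
    then show ?thesis
      using that cycle_indep_subset[OF cycle_indep_singleton[of n x], of "{x, y} - {z}"] assms by auto
  qed
  then show ?thesis using cycle_ZIr_set_iff[OF assms(1)] assms by simp
qed

lemma force_step_cycle_indep:
  assumes n: "3 \<le> n" and S: "S \<subseteq> {0..<n}" "cycle_indep n S"
  shows "force_step (cycle_V n) (cycle_E n) S = S"
proof -
  have "card (nbrs (cycle_V n) (cycle_E n) v - S) = 2" if "v \<in> S" for v
  proof -
    have "v < n" using that S(1) by auto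
    then obtain u where u: "u < n" "v = (u + 1) mod n" by (rule cycle_exists_pred)
    have "u \<notin> S" "(u + 2) mod n \<notin> S"
      using S(2) that u unfolding cycle_indep_def by (auto simp: mod_simps)
    then have "nbrs (cycle_V n) (cycle_E n) v - S = {u, (u + 2) mod n}"
      using cycle_nbrs[OF n u(1)] u by auto
    then show ?thesis using cycle_succ2_ne[OF n u(1)] by simp
  qed
  then show ?thesis unfolding force_step_def by fastforce
qed

lemma cycle_zero_forcing_set_has_edge:
  assumes n: "3 \<le> n" and B: "zero_forcing_set (cycle_V n) (cycle_E n) B"
  shows "\<exists>a\<in>B. (a + 1) mod n \<in> B"
proof (rule ccontr)
  assume no_edge: "\<not> (\<exists>a\<in>B. (a + 1) mod n \<in> B)"
  then have "cycle_indep n B" unfolding cycle_indep_def by blast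
  with B have "zf_closure (cycle_V n) (cycle_E n) B = B"
    using n by (intro zf_closure_eq_if_stalled force_step_cycle_indep)
      (auto simp: zero_forcing_set_def cycle_V_def)
  then have "0 \<in> B" "1 \<in> B" using B n by (auto simp: zero_forcing_set_def cycle_V_def)
  then show False using no_edge n by fastforce
qed

lemma force_step_cycle_advance:
  assumes n: "3 \<le> n" and u: "u < n" and S: "u \<in> S" "(u + 1) mod n \<in> S"
  shows "(u + 2) mod n \<in> force_step (cycle_V n) (cycle_E n) S"
proof (cases "(u + 2) mod n \<in> S")
  case True
  then show ?thesis using force_step_superset[of S] by (rule rev_subsetD)
next
  case False
  then have "nbrs (cycle_V n) (cycle_E n) ((u + 1) mod n) - S = {(u + 2) mod n}"
    using cycle_nbrs[OF n u] S by auto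
  moreover have "(u + 2) mod n \<in> cycle_V n" using n unfolding cycle_V_def by simp
  ultimately show ?thesis using S(2) unfolding force_step_def by blast
qed

lemma cycle_edge_zero_forcing_set:
  assumes n: "3 \<le> n" and a: "a < n"
  shows "zero_forcing_set (cycle_V n) (cycle_E n) {a, (a + 1) mod n}"
proof -
  let ?f = "force_step (cycle_V n) (cycle_E n)" and ?B = "{a, (a + 1) mod n}"
  have blue: "(a + k) mod n \<in> (?f ^^ k) ?B \<and> (a + k + 1) mod n \<in> (?f ^^ k) ?B" for k
  proof (induction k)
    case 0
    then show ?case using a by simp
  next
    case (Suc k)
    then have "((a + k) mod n + 2) mod n \<in> (?f ^^ Suc k) ?B"
      using force_step_cycle_advance[OF n, of "(a + k) mod n"] n by (simp add: mod_simps)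
    moreover have "(a + Suc k) mod n \<in> (?f ^^ Suc k) ?B"
      using Suc.IH force_step_superset[of "(?f ^^ k) ?B"] by auto
    ultimately show ?case by (simp add: mod_simps)
  qed
  show ?thesis
    unfolding zero_forcing_set_def zf_closure_def
  proof
    show "?B \<subseteq> cycle_V n" using a unfolding cycle_V_def by simp
    show "cycle_V n \<subseteq> (\<Union>k. (?f ^^ k) ?B)"
    proof
      fix v assume "v \<in> cycle_V n"
      then obtain k where "v = (a + k) mod n"
        using cycle_exists_offset[OF a] unfolding cycle_V_def by auto
      then show "v \<in> (\<Union>k. (?f ^^ k) ?B)" using blue[of k] by blast
    qed
  qed
qed

lemma cycle_zero_forcing_set_card_ge:
  assumes n: "3 \<le> n" and B: "zero_forcing_set (cycle_V n) (cycle_E n) B"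
  shows "2 \<le> card B"
proof -
  obtain a where a: "a \<in> B" "(a + 1) mod n \<in> B"
    using cycle_zero_forcing_set_has_edge[OF n B] by blast
  have B_sub: "B \<subseteq> {0..<n}" using B unfolding zero_forcing_set_def cycle_V_def by simp
  then have "card {a, (a + 1) mod n} \<le> card B"
    using a by (intro card_mono) (auto intro: finite_subset)
  then show ?thesis using card_cycle_edge[of n a] n a B_sub by auto
qed

lemma cycle_minimal_zfs_iff:
  assumes n: "3 \<le> n"
  shows "minimal_zfs (cycle_V n) (cycle_E n) B \<longleftrightarrow> (\<exists>a<n. B = {a, (a + 1) mod n})"
proof
  assume min: "minimal_zfs (cycle_V n) (cycle_E n) B"
  then have B: "zero_forcing_set (cycle_V n) (cycle_E n) B" unfolding minimal_zfs_def by simp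
  then obtain a where a: "a \<in> B" "(a + 1) mod n \<in> B"
    using cycle_zero_forcing_set_has_edge[OF n] by blast
  then have "a < n" using B unfolding zero_forcing_set_def cycle_V_def by auto
  then have "\<not> {a, (a + 1) mod n} \<subset> B"
    using min cycle_edge_zero_forcing_set[OF n] unfolding minimal_zfs_def by blast
  then show "\<exists>a<n. B = {a, (a + 1) mod n}" using a \<open>a < n\<close> by blast
next
  assume "\<exists>a<n. B = {a, (a + 1) mod n}"
  then obtain a where a: "a < n" "B = {a, (a + 1) mod n}" by blast
  have "\<not> zero_forcing_set (cycle_V n) (cycle_E n) B'" if "B' \<subset> B" for B'
  proof
    assume "zero_forcing_set (cycle_V n) (cycle_E n) B'"
    moreover have "card B' < 2"
      using psubset_card_mono[OF _ that] card_cycle_edge[of n a] n a by simp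
    ultimately show False using cycle_zero_forcing_set_card_ge[OF n] by fastforce
  qed
  then show "minimal_zfs (cycle_V n) (cycle_E n) B"
    using cycle_edge_zero_forcing_set[OF n] a unfolding minimal_zfs_def by blast
qed

lemma cycle_ZIr_set_indep:
  assumes n: "3 \<le> n" and S: "ZIr_set (cycle_V n) (cycle_E n) S" and card: "3 \<le> card S"
  shows "cycle_indep n S"
  unfolding cycle_indep_def
proof (intro ballI notI)
  fix a assume a: "a \<in> S" "(a + 1) mod n \<in> S"
  have "card {a, (a + 1) mod n} \<le> 2" by (simp add: card_insert_if)
  then have "\<not> S \<subseteq> {a, (a + 1) mod n}"
    using card card_mono[of "{a, (a + 1) mod n}" S] by auto
  then obtain x where x: "x \<in> S" "x \<notin> {a, (a + 1) mod n}" by blast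
  then have "cycle_indep n (S - {x})" using S cycle_ZIr_set_iff[OF n] by blast
  then show False using a x unfolding cycle_indep_def by blast
qed

lemma cycle_maximal_ZIr_set_card_ge:
  assumes n: "3 \<le> n" and S: "maximal_ZIr_set (cycle_V n) (cycle_E n) S"
  shows "2 \<le> card S"
proof (rule ccontr)
  assume small: "\<not> 2 \<le> card S"
  have S_sub: "S \<subseteq> {0..<n}"
    using S cycle_ZIr_set_iff[OF n] unfolding maximal_ZIr_set_def by blast
  then have "finite S" using finite_subset by blast
  then have single: "\<forall>y\<in>S. \<forall>z\<in>S. y = z" using small card_le_Suc0_iff_eq[of S] by simp
  obtain x where x: "x < n" "S \<subseteq> {x}"
  proof (cases "S = {}")
    case True
    then show ?thesis using that[of 0] n by simp
  next
    case False
    then obtain x where "x \<in> S" by blast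
    moreover from this have "x < n" using S_sub by auto
    moreover from \<open>x \<in> S\<close> have "S \<subseteq> {x}" using single by blast
    ultimately show ?thesis using that by blast
  qed
  have "ZIr_set (cycle_V n) (cycle_E n) {x, (x + 1) mod n}"
    using cycle_ZIr_set_doubleton[OF n x(1)] n by simp
  then have "{x, (x + 1) mod n} = S"
    using S x(2) unfolding maximal_ZIr_set_def by blast
  then show False using small card_cycle_edge[of n x] n x by simp
qed

lemma cycle_maximal_ZIr_set_edge:
  assumes n: "3 \<le> n" and a: "a < n"
  shows "maximal_ZIr_set (cycle_V n) (cycle_E n) {a, (a + 1) mod n}"
  unfolding maximal_ZIr_set_def
proof (intro conjI allI impI)
  show "ZIr_set (cycle_V n) (cycle_E n) {a, (a + 1) mod n}"
    using cycle_ZIr_set_doubleton[OF n a] n by simp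
  fix T assume T: "ZIr_set (cycle_V n) (cycle_E n) T \<and> {a, (a + 1) mod n} \<subseteq> T"
  show "T = {a, (a + 1) mod n}"
  proof (rule ccontr)
    assume "T \<noteq> {a, (a + 1) mod n}"
    then obtain x where x: "x \<in> T" "x \<notin> {a, (a + 1) mod n}" using T by blast
    then have "cycle_indep n (T - {x})" using T cycle_ZIr_set_iff[OF n] by blast
    then show False using T x unfolding cycle_indep_def by blast
  qed
qed

lemma card_even_below: "card {v::nat. even v \<and> v + 1 < n} = n div 2"
proof -
  have "{v::nat. even v \<and> v + 1 < n} = (\<lambda>j. 2 * j) ` {..<n div 2}"
    by (auto elim!: evenE)
  then show ?thesis by (simp add: card_image inj_on_def)
qed

lemma cycle_maximal_ZIr_set_even:
  assumes n: "4 \<le> n"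
  shows "maximal_ZIr_set (cycle_V n) (cycle_E n) {v. even v \<and> v + 1 < n}"
    (is "maximal_ZIr_set _ _ ?E")
  unfolding maximal_ZIr_set_def
proof (intro conjI allI impI)
  have n3: "3 \<le> n" using n by simp
  have indep: "cycle_indep n ?E" unfolding cycle_indep_def by auto
  show "ZIr_set (cycle_V n) (cycle_E n) ?E"
    unfolding cycle_ZIr_set_iff[OF n3] using cycle_indep_subset[OF indep Diff_subset] by auto
  fix T assume T: "ZIr_set (cycle_V n) (cycle_E n) T \<and> ?E \<subseteq> T"
  show "T = ?E"
  proof (rule ccontr)
    assume "T \<noteq> ?E"
    then obtain v where v: "v \<in> T" "v \<notin> ?E" using T by blast
    have T_sub: "T \<subseteq> {0..<n}" using T cycle_ZIr_set_iff[OF n3] by simp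
    have "?E \<subset> T" using T \<open>T \<noteq> ?E\<close> by blast
    then have "card ?E < card T" using finite_subset[OF T_sub] by (simp add: psubset_card_mono)
    then have "3 \<le> card T" using card_even_below[of n] n by linarith
    then have indep_T: "\<forall>a\<in>T. (a + 1) mod n \<notin> T"
      using cycle_ZIr_set_indep[OF n3] T unfolding cycle_indep_def by blast
    have "v < n" using v T_sub by auto
    then consider k where "v = 2 * k + 1" | "v + 1 = n" using v(2) by (auto elim: oddE)
    then show False
    proof cases
      case (1 k)
      then have "2 * k \<in> ?E" using \<open>v < n\<close> by simp
      then have "(2 * k + 1) mod n \<notin> T" using T indep_T by blast
      then show False using 1 \<open>v < n\<close> v(1) by simp
    next
      case 2
      have "0 \<in> ?E" using n by simp
      then have "0 \<in> T" using T by blast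
      moreover have "(v + 1) mod n = 0" using 2 by simp
      ultimately show False using indep_T v(1) by metis
    qed
  qed
qed

lemma cycle_Z:
  assumes n: "3 \<le> n"
  shows "Z (cycle_V n) (cycle_E n) = 2"
  unfolding Z_def
proof (rule Min_eqI)
  show "finite {card B |B. zero_forcing_set (cycle_V n) (cycle_E n) B}"
    by (rule finite_cards_of_subsets[of "{0..<n}"]) (simp_all add: zero_forcing_set_def cycle_V_def)
  show "2 \<le> c" if "c \<in> {card B |B. zero_forcing_set (cycle_V n) (cycle_E n) B}" for c
    using that cycle_zero_forcing_set_card_ge[OF n] by blast
  have "zero_forcing_set (cycle_V n) (cycle_E n) {0, (0 + 1) mod n}"
    by (rule cycle_edge_zero_forcing_set[OF n]) (use n in simp)
  moreover have "card {0, (0 + 1) mod n} = 2" using card_cycle_edge[of n 0] n by simp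
  ultimately show "2 \<in> {card B |B. zero_forcing_set (cycle_V n) (cycle_E n) B}" by auto
qed

lemma cycle_Zbar:
  assumes n: "3 \<le> n"
  shows "Zbar (cycle_V n) (cycle_E n) = 2"
proof -
  have "{card B |B. minimal_zfs (cycle_V n) (cycle_E n) B} = {2}"
  proof
    show "{card B |B. minimal_zfs (cycle_V n) (cycle_E n) B} \<subseteq> {2}"
      using cycle_minimal_zfs_iff[OF n] card_cycle_edge[of n] n by auto
    have "minimal_zfs (cycle_V n) (cycle_E n) {0, (0 + 1) mod n}"
      unfolding cycle_minimal_zfs_iff[OF n] using n by (intro exI[of _ 0]) simp
    moreover have "card {0, (0 + 1) mod n} = 2" using card_cycle_edge[of n 0] n by simp
    ultimately show "{2} \<subseteq> {card B |B. minimal_zfs (cycle_V n) (cycle_E n) B}" by auto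
  qed
  then show ?thesis unfolding Zbar_def by simp
qed

lemma finite_cycle_maximal_ZIr_cards:
  "3 \<le> n \<Longrightarrow> finite {card S |S. maximal_ZIr_set (cycle_V n) (cycle_E n) S}"
  by (rule finite_cards_of_subsets[of "{0..<n}"])
    (auto simp: maximal_ZIr_set_def cycle_ZIr_set_iff)

lemma cycle_zir:
  assumes n: "3 \<le> n"
  shows "zir (cycle_V n) (cycle_E n) = 2"
  unfolding zir_def
proof (rule Min_eqI)
  show "2 \<le> c" if "c \<in> {card S |S. maximal_ZIr_set (cycle_V n) (cycle_E n) S}" for c
    using that cycle_maximal_ZIr_set_card_ge[OF n] by blast
  have "maximal_ZIr_set (cycle_V n) (cycle_E n) {0, (0 + 1) mod n}"
    by (rule cycle_maximal_ZIr_set_edge[OF n]) (use n in simp)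
  moreover have "card {0, (0 + 1) mod n} = 2" using card_cycle_edge[of n 0] n by simp
  ultimately show "2 \<in> {card S |S. maximal_ZIr_set (cycle_V n) (cycle_E n) S}" by auto
qed (rule finite_cycle_maximal_ZIr_cards[OF n])

lemma cycle_ZIR:
  assumes n: "4 \<le> n"
  shows "ZIR (cycle_V n) (cycle_E n) = n div 2"
  unfolding ZIR_def
proof (rule Max_eqI)
  have n3: "3 \<le> n" using n by simp
  show "finite {card S |S. maximal_ZIr_set (cycle_V n) (cycle_E n) S}"
    by (rule finite_cycle_maximal_ZIr_cards[OF n3])
  show "c \<le> n div 2" if c: "c \<in> {card S |S. maximal_ZIr_set (cycle_V n) (cycle_E n) S}" for c
  proof -
    obtain S where S: "c = card S" "ZIr_set (cycle_V n) (cycle_E n) S"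
      using c unfolding maximal_ZIr_set_def by blast
    show ?thesis
    proof (cases "3 \<le> card S")
      case True
      have "S \<subseteq> {0..<n}" using S(2) cycle_ZIr_set_iff[OF n3] by blast
      then have "2 * card S \<le> n"
        by (rule cycle_indep_card_le[OF cycle_ZIr_set_indep[OF n3 S(2) True]])
      then show ?thesis using S(1) by linarith
    next
      case False
      then show ?thesis using S(1) n by linarith
    qed
  qed
  show "n div 2 \<in> {card S |S. maximal_ZIr_set (cycle_V n) (cycle_E n) S}"
    using cycle_maximal_ZIr_set_even[OF n] unfolding card_even_below[of n, symmetric] by blast
qed

theorem proposition3p2:
  fixes n :: nat
  assumes "n \<ge> 4"
  shows "zir (cycle_V n) (cycle_E n) = 2 \<and> Z (cycle_V n) (cycle_E n) = 2 \<and>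
         Zbar (cycle_V n) (cycle_E n) = 2 \<and> ZIR (cycle_V n) (cycle_E n) = n div 2"
proof -
  have "3 \<le> n" using assms by simp
  then show ?thesis using cycle_zir cycle_Z cycle_Zbar cycle_ZIR[OF assms] by simp
qed

end
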